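(* Let $\mathcal{H}$ be a finite-dimensional complex Hilbert space and let $\Phi: B(\mathcal{H})\to B(\mathcal{H})$ be a Hermitian-preserving trace-preserving linear map which is invertible. Then $\Phi$ is semi-positive if and only if $\Phi^{-1}$ is semi-positive. In particular, if $\Phi$ is CPTP (or positive and trace-preserving) and invertible, then $\Phi^{-1}$ is semi-positive and trace-preserving.
   Context: $B(\mathcal{H})$ denotes all linear operators on $\mathcal{H}$; a density matrix is a positive semidefinite operator of trace one. A map is Hermitian-preserving if $\Phi(X^\dagger)=\Phi(X)^\dagger$ and trace-preserving if $\operatorname{Tr}\Phi(X)=\operatorname{Tr}X$. A Hermitian-preserving map $\Phi$ is semi-positive if there exists an invertible density matrix $\rho$ such that $\Phi(\rho)$ is an invertible density matrix. *)

theory Defs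
  imports "HOL-Analysis.Analysis"
begin

text \<open>B(H) for H = C^n (n = CARD('n)) is modelled as complex^'n^'n.\<close>

type_synonym 'n cmat = "complex^'n^'n"

definition adjoint_mat :: "'n::finite cmat \<Rightarrow> 'n cmat" where
  "adjoint_mat X = (\<chi> i j. cnj (X $ j $ i))"

definition cscale_mat :: "complex \<Rightarrow> 'n::finite cmat \<Rightarrow> 'n cmat" where
  "cscale_mat c X = (\<chi> i j. c * X $ i $ j)"

definition clinear_map :: "('n::finite cmat \<Rightarrow> 'n cmat) \<Rightarrow> bool" where
  "clinear_map \<Phi> \<longleftrightarrow> (\<forall>X Y. \<Phi> (X + Y) = \<Phi> X + \<Phi> Y) \<and>
                     (\<forall>c X. \<Phi> (cscale_mat c X) = cscale_mat c (\<Phi> X))"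

definition psd :: "'n::finite cmat \<Rightarrow> bool" where
  "psd A \<longleftrightarrow> (\<forall>v::complex^'n.
      let q = (\<Sum>i\<in>UNIV. \<Sum>j\<in>UNIV. cnj (v $ i) * A $ i $ j * v $ j)
      in Im q = 0 \<and> Re q \<ge> 0)"

definition density_matrix :: "'n::finite cmat \<Rightarrow> bool" where
  "density_matrix \<rho> \<longleftrightarrow> psd \<rho> \<and> trace \<rho> = 1"

definition hermitian_preserving :: "('n::finite cmat \<Rightarrow> 'n cmat) \<Rightarrow> bool" where
  "hermitian_preserving \<Phi> \<longleftrightarrow> (\<forall>X. \<Phi> (adjoint_mat X) = adjoint_mat (\<Phi> X))"

definition trace_preserving :: "('n::finite cmat \<Rightarrow> 'n cmat) \<Rightarrow> bool" where
  "trace_preserving \<Phi> \<longleftrightarrow> (\<forall>X. trace (\<Phi> X) = trace X)"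

definition positive_map :: "('n::finite cmat \<Rightarrow> 'n cmat) \<Rightarrow> bool" where
  "positive_map \<Phi> \<longleftrightarrow> (\<forall>X. psd X \<longrightarrow> psd (\<Phi> X))"

text \<open>As in the paper, semi-positivity is a notion for Hermitian-preserving maps.\<close>
definition semi_positive :: "('n::finite cmat \<Rightarrow> 'n cmat) \<Rightarrow> bool" where
  "semi_positive \<Phi> \<longleftrightarrow> hermitian_preserving \<Phi> \<and>
     (\<exists>\<rho>. density_matrix \<rho> \<and> invertible \<rho> \<and>
          density_matrix (\<Phi> \<rho>) \<and> invertible (\<Phi> \<rho>))"

end

theory Submission
  imports Defs
begin

text \<open>If \<Phi> is invertible, \<rho> witnesses semi-positivity of \<Phi> exactly when \<Phi>(\<rho>) witnesses
  semi-positivity of the inverse map, which gives the equivalence. For a positive trace-preserving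
  invertible \<Phi> the maximally mixed state \<rho> is a witness: if \<Phi>(\<rho>) annihilated a vector v \<noteq> 0,
  write v v* = \<Phi>(H) with H Hermitian; since \<rho> is an order unit, c \<rho> - H \<ge> 0 for some c,
  hence c \<Phi>(\<rho>) - v v* \<ge> 0, and evaluating this at v gives -|v|^4 \<ge> 0.\<close>

definition quad_form :: "'n::finite cmat \<Rightarrow> complex^'n \<Rightarrow> complex" where
  "quad_form A v = (\<Sum>i\<in>UNIV. \<Sum>j\<in>UNIV. cnj (v $ i) * A $ i $ j * v $ j)"

lemma psd_iff_quad_form: "psd A \<longleftrightarrow> (\<forall>v. Im (quad_form A v) = 0 \<and> Re (quad_form A v) \<ge> 0)"
  unfolding psd_def quad_form_def Let_def by simp

lemma quad_form_add: "quad_form (A + B) v = quad_form A v + quad_form B v"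
  unfolding quad_form_def by (simp add: distrib_left distrib_right sum.distrib)

lemma quad_form_cscale_mat: "quad_form (cscale_mat c A) v = c * quad_form A v"
  unfolding quad_form_def cscale_mat_def
  by (simp add: sum_distrib_left mult.commute mult.left_commute)

lemma quad_form_eq_0_if_kernel:
  assumes "A *v v = 0"
  shows "quad_form A v = 0"
proof -
  have "quad_form A v = (\<Sum>i\<in>UNIV. cnj (v $ i) * (A *v v) $ i)"
    unfolding quad_form_def matrix_vector_mult_def by (simp add: sum_distrib_left mult.assoc)
  then show ?thesis using assms by simp
qed

lemma power2_norm_vec: "(norm v)\<^sup>2 = (\<Sum>i\<in>UNIV. (norm (v $ i))\<^sup>2)"
  unfolding norm_vec_def L2_set_def by (simp add: sum_nonneg)

lemma sum_cnj_mult_self: "(\<Sum>i\<in>UNIV. cnj (v $ i) * v $ i) = complex_of_real ((norm v)\<^sup>2)"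
  unfolding power2_norm_vec of_real_sum
  by (intro sum.cong refl) (metis complex_norm_square mult.commute of_real_power)

lemma quad_form_mat_1: "quad_form (mat 1) v = complex_of_real ((norm v)\<^sup>2)"
proof -
  have "quad_form (mat 1) v = (\<Sum>i\<in>UNIV. cnj (v $ i) * v $ i)"
    unfolding quad_form_def mat_def by (simp add: if_distrib if_distribR cong: if_cong)
  then show ?thesis by (simp add: sum_cnj_mult_self)
qed

lemma quad_form_outer_self:
  "quad_form (\<chi> i j. v $ i * cnj (v $ j)) v = complex_of_real ((norm v)\<^sup>2 * (norm v)\<^sup>2)"
proof -
  have "quad_form (\<chi> i j. v $ i * cnj (v $ j)) v =
      (\<Sum>i\<in>UNIV. \<Sum>j\<in>UNIV. (cnj (v $ i) * v $ i) * (cnj (v $ j) * v $ j))"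
    unfolding quad_form_def by (simp add: mult.commute mult.left_commute)
  also have "\<dots> = (\<Sum>i\<in>UNIV. cnj (v $ i) * v $ i) * (\<Sum>j\<in>UNIV. cnj (v $ j) * v $ j)"
    by (simp add: sum_product)
  finally show ?thesis by (simp add: sum_cnj_mult_self)
qed

lemma Im_quad_form_hermitian:
  assumes "adjoint_mat H = H"
  shows "Im (quad_form H v) = 0"
proof -
  have entry: "cnj (H $ i $ j) = H $ j $ i" for i j
    using arg_cong[OF assms, of "\<lambda>M. M $ j $ i"] by (simp add: adjoint_mat_def)
  have "cnj (quad_form H v) = (\<Sum>i\<in>UNIV. \<Sum>j\<in>UNIV. cnj (v $ j) * H $ j $ i * v $ i)"
    unfolding quad_form_def by (simp add: entry mult.commute mult.left_commute)
  also have "\<dots> = quad_form H v"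
    unfolding quad_form_def by (rule sum.swap)
  finally show ?thesis using Reals_cnj_iff complex_is_Real_iff by metis
qed

lemma norm_quad_form_le:
  "norm (quad_form A v) \<le> (\<Sum>i\<in>UNIV. \<Sum>j\<in>UNIV. norm (A $ i $ j)) * (norm v)\<^sup>2"
proof -
  have "norm (quad_form A v) \<le> (\<Sum>i\<in>UNIV. \<Sum>j\<in>UNIV. norm (cnj (v $ i) * A $ i $ j * v $ j))"
    unfolding quad_form_def by (rule order_trans[OF norm_sum sum_mono[OF norm_sum]])
  also have "\<dots> \<le> (\<Sum>i\<in>UNIV. \<Sum>j\<in>UNIV. norm (A $ i $ j) * (norm v)\<^sup>2)"
  proof (intro sum_mono)
    fix i j
    have "norm (v $ i) * norm (v $ j) \<le> norm v * norm v"
      by (intro mult_mono Finite_Cartesian_Product.norm_nth_le) auto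
    then have "norm (A $ i $ j) * (norm (v $ i) * norm (v $ j)) \<le> norm (A $ i $ j) * (norm v)\<^sup>2"
      by (simp add: power2_eq_square mult_left_mono)
    then show "norm (cnj (v $ i) * A $ i $ j * v $ j) \<le> norm (A $ i $ j) * (norm v)\<^sup>2"
      by (simp add: norm_mult mult_ac)
  qed
  finally show ?thesis by (simp add: sum_distrib_right)
qed

lemma hermitian_preserving_inv:
  assumes "hermitian_preserving \<Phi>" and "bij \<Phi>"
  shows "hermitian_preserving (inv \<Phi>)"
  unfolding hermitian_preserving_def
proof
  fix X
  have "\<Phi> (adjoint_mat (inv \<Phi> X)) = adjoint_mat X"
    using assms unfolding hermitian_preserving_def by (simp add: bij_is_surj surj_f_inv_f)
  then show "inv \<Phi> (adjoint_mat X) = adjoint_mat (inv \<Phi> X)"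
    using assms(2) by (metis bij_inv_eq_iff)
qed

lemma trace_preserving_inv:
  assumes "trace_preserving \<Phi>" and "bij \<Phi>"
  shows "trace_preserving (inv \<Phi>)"
  using assms unfolding trace_preserving_def by (metis bij_is_surj surj_f_inv_f)

lemma semi_positive_inv:
  assumes "semi_positive \<Phi>" and "bij \<Phi>"
  shows "semi_positive (inv \<Phi>)"
proof -
  obtain \<rho> where \<rho>: "density_matrix \<rho>" "invertible \<rho>" "density_matrix (\<Phi> \<rho>)" "invertible (\<Phi> \<rho>)"
    and hp: "hermitian_preserving \<Phi>"
    using assms(1) unfolding semi_positive_def by blast
  have "inv \<Phi> (\<Phi> \<rho>) = \<rho>" using assms(2) by (simp add: bij_is_inj)
  then show ?thesis
    unfolding semi_positive_def using hermitian_preserving_inv[OF hp assms(2)] \<rho> by metis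
qed

lemma semi_positive_inv_iff:
  assumes "bij \<Phi>"
  shows "semi_positive (inv \<Phi>) \<longleftrightarrow> semi_positive \<Phi>"
  using semi_positive_inv[of "inv \<Phi>"] semi_positive_inv[of \<Phi>] assms
  by (metis bij_imp_bij_inv inv_inv_eq)

definition order_unit :: "'n::finite cmat \<Rightarrow> bool" where
  "order_unit P \<longleftrightarrow> (\<forall>H. adjoint_mat H = H \<longrightarrow> (\<exists>c. psd (cscale_mat c P + cscale_mat (-1) H)))"

lemma invertible_image_order_unit:
  fixes \<Phi> :: "'n::finite cmat \<Rightarrow> 'n cmat"
  assumes lin: "clinear_map \<Phi>" and hp: "hermitian_preserving \<Phi>" and "bij \<Phi>"
    and pos: "positive_map \<Phi>" and "order_unit P"
  shows "invertible (\<Phi> P)"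
proof (rule ccontr)
  assume "\<not> invertible (\<Phi> P)"
  then obtain v where "v \<noteq> 0" and ker: "\<Phi> P *v v = 0"
    unfolding invertible_left_inverse matrix_left_invertible_ker by blast
  define K :: "'n cmat" where "K = (\<chi> i j. v $ i * cnj (v $ j))"
  have "adjoint_mat K = K"
    unfolding K_def adjoint_mat_def by (simp add: vec_eq_iff)
  then have "adjoint_mat (inv \<Phi> K) = inv \<Phi> K"
    using hermitian_preserving_inv[OF hp \<open>bij \<Phi>\<close>] unfolding hermitian_preserving_def by metis
  then obtain c where "psd (cscale_mat c P + cscale_mat (-1) (inv \<Phi> K))"
    using \<open>order_unit P\<close> unfolding order_unit_def by blast
  moreover have "\<Phi> (cscale_mat c P + cscale_mat (-1) (inv \<Phi> K)) = cscale_mat c (\<Phi> P) + cscale_mat (-1) K"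
    using lin \<open>bij \<Phi>\<close> unfolding clinear_map_def by (simp add: bij_is_surj surj_f_inv_f)
  ultimately have "psd (cscale_mat c (\<Phi> P) + cscale_mat (-1) K)"
    using pos unfolding positive_map_def by metis
  moreover have "quad_form (cscale_mat c (\<Phi> P) + cscale_mat (-1) K) v
      = - complex_of_real ((norm v)\<^sup>2 * (norm v)\<^sup>2)"
    by (simp add: quad_form_add quad_form_cscale_mat quad_form_eq_0_if_kernel[OF ker]
        K_def quad_form_outer_self)
  ultimately have "0 \<le> Re (- complex_of_real ((norm v)\<^sup>2 * (norm v)\<^sup>2))"
    unfolding psd_iff_quad_form by metis
  with \<open>v \<noteq> 0\<close> show False by simp
qed

definition maximally_mixed :: "'n::finite cmat" where
  "maximally_mixed = cscale_mat (1 / of_nat CARD('n)) (mat 1)"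

lemma density_matrix_maximally_mixed: "density_matrix maximally_mixed"
  unfolding density_matrix_def psd_iff_quad_form maximally_mixed_def quad_form_cscale_mat quad_form_mat_1
  by (simp add: trace_def cscale_mat_def mat_def)

lemma invertible_maximally_mixed: "invertible maximally_mixed"
  unfolding invertible_left_inverse matrix_left_invertible_ker
proof (intro allI impI)
  fix x :: "complex^'n"
  have "maximally_mixed *v x = (\<chi> i. x $ i / of_nat CARD('n))"
    unfolding maximally_mixed_def cscale_mat_def mat_def matrix_vector_mult_def
    by (simp add: vec_eq_iff if_distrib if_distribR cong: if_cong)
  then show "maximally_mixed *v x = 0 \<Longrightarrow> x = 0" by (simp add: vec_eq_iff)
qed

lemma order_unit_maximally_mixed: "order_unit (maximally_mixed :: 'n::finite cmat)"
  unfolding order_unit_def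
proof (intro allI impI exI)
  fix H :: "'n cmat"
  assume herm: "adjoint_mat H = H"
  define M where "M = (\<Sum>i\<in>UNIV. \<Sum>j\<in>UNIV. norm (H $ i $ j))"
  show "psd (cscale_mat (of_nat CARD('n) * complex_of_real M) maximally_mixed + cscale_mat (-1) H)"
    unfolding psd_iff_quad_form
  proof
    fix v :: "complex^'n"
    have "Re (quad_form H v) \<le> M * (norm v)\<^sup>2"
      using norm_quad_form_le[of H v] complex_Re_le_cmod[of "quad_form H v"] unfolding M_def by linarith
    then show "Im (quad_form (cscale_mat (of_nat CARD('n) * complex_of_real M) maximally_mixed
        + cscale_mat (-1) H) v) = 0 \<and>
      0 \<le> Re (quad_form (cscale_mat (of_nat CARD('n) * complex_of_real M) maximally_mixed
        + cscale_mat (-1) H) v)"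
      unfolding quad_form_add quad_form_cscale_mat maximally_mixed_def quad_form_mat_1
      by (simp add: Im_quad_form_hermitian[OF herm])
  qed
qed

lemma semi_positive_if_positive_map:
  assumes "clinear_map \<Phi>" and "hermitian_preserving \<Phi>" and "trace_preserving \<Phi>"
    and "bij \<Phi>" and "positive_map \<Phi>"
  shows "semi_positive \<Phi>"
proof -
  have "invertible (\<Phi> maximally_mixed)"
    using invertible_image_order_unit[OF assms(1,2,4,5) order_unit_maximally_mixed] .
  moreover have "density_matrix (\<Phi> maximally_mixed)"
    using density_matrix_maximally_mixed assms(3,5)
    unfolding density_matrix_def positive_map_def trace_preserving_def by metis
  ultimately show ?thesis
    unfolding semi_positive_def
    using assms(2) density_matrix_maximally_mixed invertible_maximally_mixed by blast
qed

theorem corollary1: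
  fixes \<Phi> :: "'n::finite cmat \<Rightarrow> 'n cmat"
  assumes "clinear_map \<Phi>" and "hermitian_preserving \<Phi>" and "trace_preserving \<Phi>"
    and "bij \<Phi>"
  shows "(semi_positive \<Phi> \<longleftrightarrow> semi_positive (inv \<Phi>)) \<and>
         (positive_map \<Phi> \<longrightarrow> semi_positive (inv \<Phi>) \<and> trace_preserving (inv \<Phi>))"
  using semi_positive_inv_iff[OF assms(4)] semi_positive_if_positive_map[OF assms]
    trace_preserving_inv[OF assms(3,4)]
  by blast

end
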